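(* Let $M$ be an $N\times N$ and $N_0$ an $r\times N$ complex matrix. Then $I-\widetilde M$ is invertible, and if the series $\sum_{m=0}^\infty N_0M^m$ converges, then $\sum_{m=0}^\infty N_0M^m=N_0(I-\widetilde M)^{-1}$.
   Context: For a square complex matrix $M$ with Jordan decomposition $M=SJS^{-1}$, where $S$ is nonsingular and $J=\mathrm{diag}(J_{n_1}(\lambda_1),\dots,J_{n_k}(\lambda_k))$ with $J_{n_i}(\lambda_i)$ the $n_i\times n_i$ Jordan block for eigenvalue $\lambda_i$, define $\widetilde M=S\widetilde JS^{-1}$, where $\widetilde J=\mathrm{diag}(J^1,\dots,J^k)$ with $J^i=0_{n_i\times n_i}$ if $|\lambda_i|\ge1$ and $J^i=J_{n_i}(\lambda_i)$ otherwise. $I$ is the identity matrix. *)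

theory Defs
  imports "Jordan_Normal_Form.Jordan_Normal_Form"
begin

definition tilde_jordan :: "(nat \<times> complex) list \<Rightarrow> complex mat" where
  "tilde_jordan bs = diag_block_mat
     (map (\<lambda>(n, a). if cmod a \<ge> 1 then 0\<^sub>m n n else jordan_block n a) bs)"

text \<open>Given a Jordan decomposition M = S * jordan_matrix bs * Sinv (Sinv the inverse of S),
  the matrix M-tilde = S * tilde_jordan bs * Sinv.\<close>
definition tilde_mat :: "complex mat \<Rightarrow> complex mat \<Rightarrow> (nat \<times> complex) list \<Rightarrow> complex mat" where
  "tilde_mat S Sinv bs = S * tilde_jordan bs * Sinv"

definition mat_inv :: "complex mat \<Rightarrow> complex mat" where
  "mat_inv A = (SOME B. inverts_mat A B \<and> inverts_mat B A)"

text \<open>A matrix series sum F m (m = 0,1,...) converges to L, entrywise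
  (equivalently in any norm, all matrices being of the same finite size).\<close>
definition mat_sums :: "(nat \<Rightarrow> complex mat) \<Rightarrow> complex mat \<Rightarrow> bool" where
  "mat_sums F L \<longleftrightarrow> (\<forall>i < dim_row L. \<forall>j < dim_col L. (\<lambda>m. F m $$ (i, j)) sums (L $$ (i, j)))"

end

theory Submission
  imports Defs
begin

(* Invertibility: 1 - M~ is similar to 1 - J~, which is block-diagonal with blocks 1 or 1 - J_n(a),
   |a| < 1; all these blocks have nonzero determinant.

   Summation: if \<Sum> N0 M^m converges then N0 M^m \<rightarrow> 0.  Writing Y = N0 S, this says Y J^m \<rightarrow> 0,
   which forces the columns of Y belonging to blocks with |a| \<ge> 1 to vanish (on such a block the
   first nonzero column would grow like a^m).  On the remaining blocks J and J~ agree, so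
   N0 M~^m = N0 M^m for every m.  Hence the series is \<Sum> N0 M~^m, and telescoping gives
   L (1 - M~) = N0 for its sum L, i.e. L = N0 (1 - M~)\<inverse>. *)


lemma diag_block_mat_carrier:
  fixes f :: "'b \<Rightarrow> 'a :: zero mat"
  assumes "\<And>x. x \<in> set xs \<Longrightarrow> f x \<in> carrier_mat (d x) (d x)"
  shows "diag_block_mat (map f xs) \<in> carrier_mat (\<Sum>x\<leftarrow>xs. d x) (\<Sum>x\<leftarrow>xs. d x)"
  using assms by (induct xs) (auto simp: Let_def)

lemma diag_block_mat_mult:
  fixes f g :: "'b \<Rightarrow> 'a :: semiring_0 mat"
  assumes "\<And>x. x \<in> set xs \<Longrightarrow> f x \<in> carrier_mat (d x) (d x) \<and> g x \<in> carrier_mat (d x) (d x)"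
  shows "diag_block_mat (map f xs) * diag_block_mat (map g xs) = diag_block_mat (map (\<lambda>x. f x * g x) xs)"
  using assms
proof (induct xs)
  case (Cons x xs)
  let ?k = "\<Sum>x\<leftarrow>xs. d x"
  have F: "diag_block_mat (map f xs) \<in> carrier_mat ?k ?k"
   and G: "diag_block_mat (map g xs) \<in> carrier_mat ?k ?k"
   and FG: "diag_block_mat (map (\<lambda>x. f x * g x) xs) \<in> carrier_mat ?k ?k"
    using Cons.prems by (auto intro!: diag_block_mat_carrier mult_carrier_mat)
  have fx: "f x \<in> carrier_mat (d x) (d x)" and gx: "g x \<in> carrier_mat (d x) (d x)"
    using Cons.prems by auto
  have zero_blocks: "f x * g x + 0\<^sub>m (d x) (d x) = f x * g x"
    "f x * 0\<^sub>m (d x) ?k + 0\<^sub>m (d x) ?k = 0\<^sub>m (d x) ?k"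
    "0\<^sub>m ?k (d x) * g x + 0\<^sub>m ?k (d x) = 0\<^sub>m ?k (d x)"
    "0\<^sub>m ?k ?k + diag_block_mat (map (\<lambda>x. f x * g x) xs) = diag_block_mat (map (\<lambda>x. f x * g x) xs)"
    using fx gx FG by auto
  show ?case
    unfolding list.map diag_block_mat.simps Let_def
      carrier_matD[OF fx] carrier_matD[OF gx] carrier_matD[OF F] carrier_matD[OF G]
    by (subst mult_four_block_mat[OF fx _ _ F gx _ _ G])
      (use Cons F G FG zero_blocks carrier_matD[OF fx] carrier_matD[OF gx] carrier_matD[OF FG] in auto)
qed simp

lemma one_minus_diag_block_mat:
  fixes f :: "'b \<Rightarrow> 'a :: ring_1 mat"
  assumes "\<And>x. x \<in> set xs \<Longrightarrow> f x \<in> carrier_mat (d x) (d x)"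
  shows "1\<^sub>m (\<Sum>x\<leftarrow>xs. d x) - diag_block_mat (map f xs) = diag_block_mat (map (\<lambda>x. 1\<^sub>m (d x) - f x) xs)"
  using assms
proof (induct xs)
  case (Cons x xs)
  have F: "diag_block_mat (map f xs) \<in> carrier_mat (\<Sum>x\<leftarrow>xs. d x) (\<Sum>x\<leftarrow>xs. d x)"
    using Cons.prems by (auto intro!: diag_block_mat_carrier)
  have fx: "f x \<in> carrier_mat (d x) (d x)" using Cons.prems by auto
  have IH: "1\<^sub>m (\<Sum>x\<leftarrow>xs. d x) - diag_block_mat (map f xs)
      = diag_block_mat (map (\<lambda>x. 1\<^sub>m (d x) - f x) xs)"
    using Cons by auto
  show ?case
    unfolding list.map diag_block_mat.simps Let_def IH[symmetric] carrier_matD[OF fx]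
    by (rule eq_matI) (use F fx in auto)
qed (auto intro!: eq_matI)

lemma det_diag_block_mat:
  fixes f :: "'b \<Rightarrow> 'a :: idom mat"
  assumes "\<And>x. x \<in> set xs \<Longrightarrow> f x \<in> carrier_mat (d x) (d x)"
  shows "det (diag_block_mat (map f xs)) = (\<Prod>x\<leftarrow>xs. det (f x))"
  using assms
proof (induct xs)
  case Nil then show ?case by (simp add: det_def)
next
  case (Cons x xs)
  have F: "diag_block_mat (map f xs) \<in> carrier_mat (\<Sum>x\<leftarrow>xs. d x) (\<Sum>x\<leftarrow>xs. d x)"
    using Cons.prems by (auto intro!: diag_block_mat_carrier)
  have fx: "f x \<in> carrier_mat (d x) (d x)" using Cons.prems by auto
  show ?case
    using Cons F by (simp add: Let_def carrier_matD[OF fx] det_four_block_mat_lower_left_zero[OF fx _ _ F])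
qed


lemma similar_mat_wit_one_minus:
  fixes A B P Q :: "'a :: comm_ring_1 mat"
  assumes A: "A \<in> carrier_mat n n" and wit: "similar_mat_wit A B P Q"
  shows "similar_mat_wit (1\<^sub>m n - A) (1\<^sub>m n - B) P Q"
proof -
  note w = similar_mat_witD2[OF A wit]
  have "P * (1\<^sub>m n - B) = P - P * B"
    using mult_minus_distrib_mat[OF w(6) one_carrier_mat w(5)] w(6) by simp
  then have "P * (1\<^sub>m n - B) * Q = P * Q - P * B * Q"
    using minus_mult_distrib_mat[OF w(6) mult_carrier_mat[OF w(6,5)] w(7)] by simp
  then show ?thesis
    using w by (intro similar_mat_witI[of P Q n]) auto
qed

lemma invertible_mat_if_det_nonzero:
  fixes A :: "'a :: field mat"
  assumes A: "A \<in> carrier_mat n n" and det: "det A \<noteq> 0"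
  shows "invertible_mat A"
proof -
  obtain B where "B \<in> carrier_mat n n" "B * A = 1\<^sub>m n" "A * B = 1\<^sub>m n"
    using det_non_zero_imp_unit[OF A det, of "()"] unfolding Units_def ring_mat_def by auto
  then show ?thesis
    using A unfolding invertible_mat_def inverts_mat_def by (auto intro!: exI[of _ B])
qed

lemma mat_inv_right_inverse:
  assumes A: "A \<in> carrier_mat n n" and inv: "invertible_mat A"
  shows "mat_inv A \<in> carrier_mat n n" "A * mat_inv A = 1\<^sub>m n"
proof -
  have "inverts_mat A (mat_inv A) \<and> inverts_mat (mat_inv A) A"
    unfolding mat_inv_def by (rule someI_ex) (use inv in \<open>auto simp: invertible_mat_def\<close>)
  then have right: "A * mat_inv A = 1\<^sub>m n" and left: "mat_inv A * A = 1\<^sub>m (dim_row (mat_inv A))"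
    using A unfolding inverts_mat_def by auto
  show "A * mat_inv A = 1\<^sub>m n" by (fact right)
  show "mat_inv A \<in> carrier_mat n n"
    using arg_cong[OF right, of dim_col] arg_cong[OF left, of dim_col] A by auto
qed


lemma tilde_jordan_carrier:
  "tilde_jordan bs \<in> carrier_mat (\<Sum>x\<leftarrow>bs. fst x) (\<Sum>x\<leftarrow>bs. fst x)"
  unfolding tilde_jordan_def by (rule diag_block_mat_carrier) auto

(* 1 - J~ is nonsingular: its blocks are either identities or 1 - J_n(a) with |a| < 1,
   which is upper triangular with diagonal 1 - a \<noteq> 0. *)
lemma det_one_minus_tilde_jordan:
  "det (1\<^sub>m (\<Sum>x\<leftarrow>bs. fst x) - tilde_jordan bs) \<noteq> 0"
proof -
  define t where "t = (\<lambda>(n, a). if 1 \<le> cmod a then 0\<^sub>m n n else jordan_block n (a :: complex))"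
  have t: "t x \<in> carrier_mat (fst x) (fst x)" for x
    by (auto simp: t_def split: prod.split)
  have block: "det (1\<^sub>m (fst x) - t x) \<noteq> 0" for x
  proof (cases x)
    case (Pair n a)
    show ?thesis
    proof (cases "1 \<le> cmod a")
      case True
      then have "1\<^sub>m (fst x) - t x = 1\<^sub>m n" by (auto simp: t_def Pair intro!: eq_matI)
      then show ?thesis by simp
    next
      case False
      then have "a \<noteq> 1" by auto
      have "upper_triangular (1\<^sub>m n - jordan_block n a)"
        by (rule upper_triangularI) auto
      then have "det (1\<^sub>m n - jordan_block n a) = prod_list (diag_mat (1\<^sub>m n - jordan_block n a))"
        by (rule det_upper_triangular) auto
      also have "\<dots> \<noteq> 0" using \<open>a \<noteq> 1\<close> by (auto simp: prod_list_zero_iff diag_mat_def)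
      finally show ?thesis using False by (simp add: t_def Pair)
    qed
  qed
  have "1\<^sub>m (\<Sum>x\<leftarrow>bs. fst x) - tilde_jordan bs = diag_block_mat (map (\<lambda>x. 1\<^sub>m (fst x) - t x) bs)"
    unfolding tilde_jordan_def t_def[symmetric] using t by (rule one_minus_diag_block_mat)
  also have "det \<dots> = (\<Prod>x\<leftarrow>bs. det (1\<^sub>m (fst x) - t x))"
    using t by (intro det_diag_block_mat[where d = fst] minus_carrier_mat) auto
  finally show ?thesis using block by (auto simp: prod_list_zero_iff)
qed

definition disc_proj :: "(nat \<times> complex) list \<Rightarrow> complex mat" where
  "disc_proj bs = diag_block_mat (map (\<lambda>(n, a). if 1 \<le> cmod a then 0\<^sub>m n n else 1\<^sub>m n) bs)"

lemma disc_proj_carrier: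
  "disc_proj bs \<in> carrier_mat (\<Sum>x\<leftarrow>bs. fst x) (\<Sum>x\<leftarrow>bs. fst x)"
  unfolding disc_proj_def by (rule diag_block_mat_carrier) auto

lemma disc_proj_tilde_jordan_pow:
  "disc_proj bs * tilde_jordan bs ^\<^sub>m m = disc_proj bs * jordan_matrix bs ^\<^sub>m m"
proof -
  define p where "p = (\<lambda>(n, a). if 1 \<le> cmod a then 0\<^sub>m n n else 1\<^sub>m n :: complex mat)"
  define t where "t = (\<lambda>(n, a). if 1 \<le> cmod a then 0\<^sub>m n n else jordan_block n (a :: complex))"
  define j where "j = (\<lambda>(n, a). jordan_block n (a :: complex))"
  have "tilde_jordan bs ^\<^sub>m m = diag_block_mat (map (\<lambda>x. t x ^\<^sub>m m) bs)"
    unfolding tilde_jordan_def t_def[symmetric]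
    by (subst diag_block_pow_mat) (auto simp: t_def o_def split: prod.split)
  moreover have "jordan_matrix bs ^\<^sub>m m = diag_block_mat (map (\<lambda>x. j x ^\<^sub>m m) bs)"
    unfolding jordan_matrix_pow j_def by (intro arg_cong[where f = diag_block_mat]) auto
  moreover have "p x * t x ^\<^sub>m m = p x * j x ^\<^sub>m m" for x
    by (auto simp: p_def t_def j_def split: prod.split)
  ultimately show ?thesis
    unfolding disc_proj_def p_def[symmetric]
    by (simp add: diag_block_mat_mult[where d = fst] p_def t_def j_def split: prod.split)
qed


definition mat_tendsto_zero :: "(nat \<Rightarrow> 'a :: real_normed_vector mat) \<Rightarrow> nat \<Rightarrow> nat \<Rightarrow> bool" where
  "mat_tendsto_zero F r c \<longleftrightarrow> (\<forall>i < r. \<forall>j < c. (\<lambda>m. F m $$ (i, j)) \<longlonglongrightarrow> 0)"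

lemma mat_sums_imp_tendsto_zero:
  assumes "L \<in> carrier_mat r c" and "mat_sums F L"
  shows "mat_tendsto_zero F r c"
  using assms unfolding mat_sums_def mat_tendsto_zero_def
  by (auto intro: summable_LIMSEQ_zero sums_summable)

lemma mat_tendsto_zero_mult_right:
  fixes F :: "nat \<Rightarrow> 'a :: real_normed_field mat"
  assumes F: "\<And>m. F m \<in> carrier_mat r n" and B: "B \<in> carrier_mat n c"
    and lim: "mat_tendsto_zero F r n"
  shows "mat_tendsto_zero (\<lambda>m. F m * B) r c"
  unfolding mat_tendsto_zero_def
proof (intro allI impI)
  fix i j assume ij: "i < r" "j < c"
  have "(F m * B) $$ (i, j) = (\<Sum>k<n. F m $$ (i, k) * B $$ (k, j))" for m
    using F[of m] B ij by (simp add: scalar_prod_def atLeast0LessThan)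
  moreover have "(\<lambda>m. \<Sum>k<n. F m $$ (i, k) * B $$ (k, j)) \<longlonglongrightarrow> 0"
    using lim ij unfolding mat_tendsto_zero_def by (intro tendsto_null_sum tendsto_mult_left_zero) auto
  ultimately show "(\<lambda>m. (F m * B) $$ (i, j)) \<longlonglongrightarrow> 0" by simp
qed

lemma mat_sums_mult_right:
  assumes F: "\<And>m. F m \<in> carrier_mat r n" and L: "L \<in> carrier_mat r n" and B: "B \<in> carrier_mat n c"
    and sums: "mat_sums F L"
  shows "mat_sums (\<lambda>m. F m * B) (L * B)"
  unfolding mat_sums_def
proof (intro allI impI)
  fix i j assume "i < dim_row (L * B)" "j < dim_col (L * B)"
  then have ij: "i < r" "j < c" using L B by auto
  have "(F m * B) $$ (i, j) = (\<Sum>k<n. F m $$ (i, k) * B $$ (k, j))" for m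
    using F[of m] B ij by (simp add: scalar_prod_def atLeast0LessThan)
  moreover have "(L * B) $$ (i, j) = (\<Sum>k<n. L $$ (i, k) * B $$ (k, j))"
    using L B ij by (simp add: scalar_prod_def atLeast0LessThan)
  moreover have "(\<lambda>m. \<Sum>k<n. F m $$ (i, k) * B $$ (k, j)) sums (\<Sum>k<n. L $$ (i, k) * B $$ (k, j))"
    using sums L ij unfolding mat_sums_def by (intro sums_sum sums_mult2) auto
  ultimately show "(\<lambda>m. (F m * B) $$ (i, j)) sums ((L * B) $$ (i, j))" by simp
qed

(* If the series \<Sum> N0 A^m converges to L, then L (1 - A) = N0, by telescoping:
   N0 A^m (1 - A) = N0 A^m - N0 A^(m+1) and N0 A^m \<rightarrow> 0. *)
lemma mat_sums_geometric:
  assumes N0: "N0 \<in> carrier_mat r n" and A: "A \<in> carrier_mat n n" and L: "L \<in> carrier_mat r n"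
    and sums: "mat_sums (\<lambda>m. N0 * A ^\<^sub>m m) L"
  shows "L * (1\<^sub>m n - A) = N0"
proof -
  define F where "F = (\<lambda>m. N0 * A ^\<^sub>m m)"
  have F: "F m \<in> carrier_mat r n" for m using N0 A by (auto simp: F_def)
  have step: "F m * (1\<^sub>m n - A) = F m - F (Suc m)" for m
  proof -
    have "F m * (1\<^sub>m n - A) = F m - F m * A"
      using mult_minus_distrib_mat[OF F one_carrier_mat A] F[of m] by simp
    also have "F m * A = F (Suc m)"
      unfolding F_def using N0 A by (simp add: assoc_mult_mat[of N0 r n _ n A n])
    finally show ?thesis .
  qed
  have null: "mat_tendsto_zero F r n"
    using mat_sums_imp_tendsto_zero[OF L] sums unfolding F_def by blast
  have IA: "1\<^sub>m n - A \<in> carrier_mat n n" using A by (rule minus_carrier_mat)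
  show ?thesis
  proof (rule eq_matI)
    fix i j assume "i < dim_row N0" "j < dim_col N0"
    then have ij: "i < r" "j < n" using N0 by auto
    have "(\<lambda>m. (F m * (1\<^sub>m n - A)) $$ (i, j)) sums ((L * (1\<^sub>m n - A)) $$ (i, j))"
      using mat_sums_mult_right[OF F L IA sums[folded F_def]] ij L A
      unfolding mat_sums_def by auto
    moreover have "(\<lambda>m. (F m * (1\<^sub>m n - A)) $$ (i, j)) sums (F 0 $$ (i, j))"
    proof -
      have "(\<lambda>m. F m $$ (i, j) - F (Suc m) $$ (i, j)) sums (F 0 $$ (i, j) - 0)"
        using null ij unfolding mat_tendsto_zero_def by (intro telescope_sums') auto
      moreover have "(F m * (1\<^sub>m n - A)) $$ (i, j) = F m $$ (i, j) - F (Suc m) $$ (i, j)" for m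
        unfolding step using F[of "Suc m"] ij by simp
      ultimately show ?thesis by simp
    qed
    moreover have "F 0 = N0" using N0 A by (simp add: F_def)
    ultimately show "(L * (1\<^sub>m n - A)) $$ (i, j) = N0 $$ (i, j)"
      using sums_unique2 by metis
  qed (use L N0 A in auto)
qed


lemma mult_power_tendsto_zero_imp_zero:
  fixes x a :: "'a :: real_normed_div_algebra"
  assumes a: "1 \<le> norm a" and lim: "(\<lambda>m. x * a ^ m) \<longlonglongrightarrow> 0"
  shows "x = 0"
proof -
  have "norm x \<le> norm (x * a ^ m)" for m
    using a by (simp add: norm_mult norm_power mult_le_cancel_left1 one_le_power)
  moreover have "(\<lambda>m. norm (x * a ^ m)) \<longlonglongrightarrow> 0"
    using tendsto_norm_zero[OF lim] .
  ultimately have "norm x \<le> 0"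
    by (intro tendsto_lowerbound) (auto intro: always_eventually)
  then show ?thesis by simp
qed

(* If |a| \<ge> 1 and X J_n(a)^m \<rightarrow> 0, then X = 0.  Column by column: once the columns
   before j vanish, entry (i, j) of X J_n(a)^m equals X(i, j) a^m. *)
lemma jordan_block_annihilator:
  fixes X :: "complex mat"
  assumes X: "X \<in> carrier_mat r n" and a: "1 \<le> cmod a"
    and lim: "mat_tendsto_zero (\<lambda>m. X * jordan_block n a ^\<^sub>m m) r n"
  shows "X = 0\<^sub>m r n"
proof -
  have "\<forall>i < r. X $$ (i, j) = 0" if "j < n" for j
    using that
  proof (induct j rule: less_induct)
    case (less j)
    show ?case
    proof (intro allI impI)
      fix i assume i: "i < r"
      have entry: "(X * jordan_block n a ^\<^sub>m m) $$ (i, j) = X $$ (i, j) * a ^ m" for m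
      proof -
        have "(X * jordan_block n a ^\<^sub>m m) $$ (i, j) =
          (\<Sum>k\<in>{0..<n}. X $$ (i, k) * (if k \<le> j then of_nat (m choose (j - k)) * a ^ (m + k - j) else 0))"
          using X i less.prems by (simp add: jordan_block_pow scalar_prod_def)
        also have "\<dots> = X $$ (i, j) * a ^ m"
          using less i by (subst sum.remove[of _ j]) (auto intro!: sum.neutral simp: le_less split: if_split_asm)
        finally show ?thesis .
      qed
      have "(\<lambda>m. (X * jordan_block n a ^\<^sub>m m) $$ (i, j)) \<longlonglongrightarrow> 0"
        using lim i less.prems unfolding mat_tendsto_zero_def by auto
      then have "(\<lambda>m. X $$ (i, j) * a ^ m) \<longlonglongrightarrow> 0"
        unfolding entry .
      then show "X $$ (i, j) = 0"
        by (rule mult_power_tendsto_zero_imp_zero[OF a])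
    qed
  qed
  then show ?thesis using X by (intro eq_matI) auto
qed

lemma split_columns:
  assumes "X \<in> carrier_mat r (n + k)"
  obtains X1 X2 where "X1 \<in> carrier_mat r n" "X2 \<in> carrier_mat r k"
    "X = four_block_mat X1 X2 (0\<^sub>m 0 n) (0\<^sub>m 0 k)"
proof -
  obtain X1 X2 X3 X4 where split: "split_block X r n = (X1, X2, X3, X4)"
    by (cases "split_block X r n") auto
  note blocks = split_block[OF split, of 0 k]
  have "X3 = 0\<^sub>m 0 n" "X4 = 0\<^sub>m 0 k"
    using blocks assms by (auto intro!: eq_matI)
  then show ?thesis using blocks assms that by auto
qed

lemma split_columns_mult_diag:
  fixes X1 X2 A B :: "'a :: semiring_0 mat"
  assumes "X1 \<in> carrier_mat r n" "X2 \<in> carrier_mat r k" "A \<in> carrier_mat n n" "B \<in> carrier_mat k k"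
  shows "four_block_mat X1 X2 (0\<^sub>m 0 n) (0\<^sub>m 0 k) * four_block_mat A (0\<^sub>m n k) (0\<^sub>m k n) B
    = four_block_mat (X1 * A) (X2 * B) (0\<^sub>m 0 n) (0\<^sub>m 0 k)"
  using assms by (subst mult_four_block_mat[of _ r n _ k]) (auto intro!: arg_cong4[where f = four_block_mat] eq_matI)


lemma jordan_matrix_Cons_pow:
  "jordan_matrix ((n, a) # bs) ^\<^sub>m m = four_block_mat (jordan_block n a ^\<^sub>m m)
     (0\<^sub>m n (\<Sum>x\<leftarrow>bs. fst x)) (0\<^sub>m (\<Sum>x\<leftarrow>bs. fst x) n) (jordan_matrix bs ^\<^sub>m m)"
  using pow_carrier_mat[OF jordan_matrix_carrier[of bs], of m]
  by (simp add: jordan_matrix_pow Let_def)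

lemma disc_proj_absorbs:
  fixes Y :: "complex mat"
  assumes "Y \<in> carrier_mat r (\<Sum>x\<leftarrow>bs. fst x)"
    and "mat_tendsto_zero (\<lambda>m. Y * jordan_matrix bs ^\<^sub>m m) r (\<Sum>x\<leftarrow>bs. fst x)"
  shows "Y * disc_proj bs = Y"
  using assms
proof (induct bs arbitrary: Y)
  case Nil
  then show ?case by (auto simp: disc_proj_def intro!: eq_matI)
next
  case (Cons p bs)
  obtain n a where p: "p = (n, a)" by fastforce
  define k where "k = (\<Sum>x\<leftarrow>bs. fst x)"
  have Y: "Y \<in> carrier_mat r (n + k)" using Cons.prems p k_def by auto
  then obtain Y1 Y2 where Y1: "Y1 \<in> carrier_mat r n" and Y2: "Y2 \<in> carrier_mat r k"
    and Y_split: "Y = four_block_mat Y1 Y2 (0\<^sub>m 0 n) (0\<^sub>m 0 k)"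
    by (rule split_columns)
  have Jbs: "jordan_matrix bs ^\<^sub>m m \<in> carrier_mat k k" for m
    unfolding k_def by (rule pow_carrier_mat[OF jordan_matrix_carrier])
  have YJ: "Y * jordan_matrix (p # bs) ^\<^sub>m m = four_block_mat (Y1 * jordan_block n a ^\<^sub>m m)
      (Y2 * jordan_matrix bs ^\<^sub>m m) (0\<^sub>m 0 n) (0\<^sub>m 0 k)" for m
    unfolding p jordan_matrix_Cons_pow k_def[symmetric] Y_split
    by (rule split_columns_mult_diag[OF Y1 Y2 _ Jbs]) simp
  have blocks: "Y1 * jordan_block n a ^\<^sub>m m \<in> carrier_mat r n"
    "Y2 * jordan_matrix bs ^\<^sub>m m \<in> carrier_mat r k" for m
    using Y1 Y2 Jbs[of m] by auto
  have entry1: "(Y * jordan_matrix (p # bs) ^\<^sub>m m) $$ (i, j) = (Y1 * jordan_block n a ^\<^sub>m m) $$ (i, j)"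
    if "i < r" "j < n" for i j m
    using that carrier_matD[OF blocks(1)] carrier_matD[OF blocks(2)] by (simp add: YJ del: index_mult_mat)
  have entry2: "(Y * jordan_matrix (p # bs) ^\<^sub>m m) $$ (i, n + j) = (Y2 * jordan_matrix bs ^\<^sub>m m) $$ (i, j)"
    if "i < r" "j < k" for i j m
    using that carrier_matD[OF blocks(1)] carrier_matD[OF blocks(2)] by (simp add: YJ del: index_mult_mat)
  have lim: "\<forall>i<r. \<forall>j<n + k. (\<lambda>m. (Y * jordan_matrix (p # bs) ^\<^sub>m m) $$ (i, j)) \<longlonglongrightarrow> 0"
    using Cons.prems(2) p k_def unfolding mat_tendsto_zero_def by auto
  have lim1: "mat_tendsto_zero (\<lambda>m. Y1 * jordan_block n a ^\<^sub>m m) r n"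
    using lim unfolding mat_tendsto_zero_def by (auto simp flip: entry1)
  have lim2: "mat_tendsto_zero (\<lambda>m. Y2 * jordan_matrix bs ^\<^sub>m m) r k"
    using lim unfolding mat_tendsto_zero_def by (auto simp flip: entry2)
  define D1 where "D1 = (if 1 \<le> cmod a then 0\<^sub>m n n else 1\<^sub>m n :: complex mat)"
  have D1: "D1 \<in> carrier_mat n n" by (auto simp: D1_def)
  have "Y1 * D1 = Y1"
    using jordan_block_annihilator[OF Y1 _ lim1] Y1 by (auto simp: D1_def)
  moreover have "Y2 * disc_proj bs = Y2"
    using Cons.hyps[OF _ lim2[unfolded k_def]] Y2 k_def by auto
  moreover have "disc_proj (p # bs) = four_block_mat D1 (0\<^sub>m n k) (0\<^sub>m k n) (disc_proj bs)"
    using disc_proj_carrier[of bs] by (simp add: disc_proj_def Let_def p D1_def k_def)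
  ultimately show ?case
    unfolding Y_split using split_columns_mult_diag[OF Y1 Y2 D1] disc_proj_carrier[of bs]
    by (simp add: k_def)
qed


lemma similar_mat_wit_tilde:
  assumes M: "M \<in> carrier_mat N N" and wit: "similar_mat_wit M (jordan_matrix bs) S Sinv"
  shows "tilde_mat S Sinv bs \<in> carrier_mat N N"
    "similar_mat_wit (tilde_mat S Sinv bs) (tilde_jordan bs) S Sinv"
proof -
  note w = similar_mat_witD2[OF M wit]
  have "(\<Sum>x\<leftarrow>bs. fst x) = N" using w(5) by auto
  then have "tilde_jordan bs \<in> carrier_mat N N" using tilde_jordan_carrier[of bs] by simp
  then show "tilde_mat S Sinv bs \<in> carrier_mat N N"
    "similar_mat_wit (tilde_mat S Sinv bs) (tilde_jordan bs) S Sinv"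
    using w by (auto simp: tilde_mat_def intro!: similar_mat_witI[of S Sinv N])
qed

(* Key step: if N0 M^m \<rightarrow> 0, then N0 M~^m = N0 M^m for all m.  With Y = N0 S we have
   Y J^m = N0 M^m S \<rightarrow> 0, hence Y = Y D for the disc projection D, and D J~^m = D J^m. *)
lemma tilde_mat_power_agrees:
  fixes M N0 S Sinv :: "complex mat"
  assumes M: "M \<in> carrier_mat N N" and N0: "N0 \<in> carrier_mat r N"
    and wit: "similar_mat_wit M (jordan_matrix bs) S Sinv"
    and null: "mat_tendsto_zero (\<lambda>m. N0 * M ^\<^sub>m m) r N"
  shows "N0 * tilde_mat S Sinv bs ^\<^sub>m m = N0 * M ^\<^sub>m m"
proof -
  define J where "J = jordan_matrix bs"
  define TJ where "TJ = tilde_jordan bs"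
  define D where "D = disc_proj bs"
  define Y where "Y = N0 * S"
  note w = similar_mat_witD2[OF M wit, folded J_def]
  have S: "S \<in> carrier_mat N N" and Sinv: "Sinv \<in> carrier_mat N N" and J: "J \<in> carrier_mat N N"
    using w by auto
  have dim: "(\<Sum>x\<leftarrow>bs. fst x) = N" using J unfolding J_def by auto
  have TJ: "TJ \<in> carrier_mat N N" and D: "D \<in> carrier_mat N N"
    using tilde_jordan_carrier[of bs] disc_proj_carrier[of bs] unfolding dim TJ_def D_def by auto
  have Y: "Y \<in> carrier_mat r N" using N0 S by (simp add: Y_def)
  have Jpow: "J ^\<^sub>m k \<in> carrier_mat N N" and TJpow: "TJ ^\<^sub>m k \<in> carrier_mat N N" for k
    using J TJ by auto
  have YJ: "Y * J ^\<^sub>m k = N0 * M ^\<^sub>m k * S" for k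
  proof -
    have "N0 * M ^\<^sub>m k * S = N0 * (S * J ^\<^sub>m k * Sinv) * S"
      using similar_mat_wit_pow_id[OF wit] by (simp add: J_def)
    also have "\<dots> = Y * J ^\<^sub>m k * (Sinv * S)"
      using N0 S Sinv Jpow[of k] by (simp add: Y_def assoc_mult_mat[of _ r N _ N _ N] assoc_mult_mat[of _ N N _ N _ N])
    finally show ?thesis using w Y J by simp
  qed
  have "mat_tendsto_zero (\<lambda>k. Y * J ^\<^sub>m k) r N"
    unfolding YJ by (rule mat_tendsto_zero_mult_right[OF _ S null]) (use N0 M in auto)
  then have "Y * D = Y"
    unfolding D_def J_def using Y by (intro disc_proj_absorbs) (simp_all add: dim)
  have "N0 * tilde_mat S Sinv bs ^\<^sub>m m = Y * TJ ^\<^sub>m m * Sinv"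
    using similar_mat_wit_pow_id[OF similar_mat_wit_tilde(2)[OF M wit], folded TJ_def] N0 S TJ Sinv
    by (simp add: Y_def assoc_mult_mat[of _ r N _ N _ N] assoc_mult_mat[of _ N N _ N _ N])
  also have "\<dots> = Y * (D * TJ ^\<^sub>m m) * Sinv"
    using assoc_mult_mat[OF Y D TJpow[of m]] \<open>Y * D = Y\<close> by simp
  also have "\<dots> = Y * (D * J ^\<^sub>m m) * Sinv"
    using disc_proj_tilde_jordan_pow by (simp add: D_def TJ_def J_def)
  also have "\<dots> = Y * J ^\<^sub>m m * Sinv"
    using assoc_mult_mat[OF Y D Jpow[of m]] \<open>Y * D = Y\<close> by simp
  also have "\<dots> = N0 * M ^\<^sub>m m"
    using similar_mat_wit_pow_id[OF wit] N0 S J Sinv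
    by (simp add: Y_def J_def assoc_mult_mat[of _ r N _ N _ N] assoc_mult_mat[of _ N N _ N _ N])
  finally show ?thesis .
qed

theorem corollaryA1:
  fixes M N0 S Sinv :: "complex mat" and bs :: "(nat \<times> complex) list" and N r :: nat
  assumes "M \<in> carrier_mat N N"
    and "N0 \<in> carrier_mat r N"
    and "similar_mat_wit M (jordan_matrix bs) S Sinv"
  shows "invertible_mat (1\<^sub>m N - tilde_mat S Sinv bs)
    \<and> ((\<exists>L \<in> carrier_mat r N. mat_sums (\<lambda>m. N0 * M ^\<^sub>m m) L)
        \<longrightarrow> mat_sums (\<lambda>m. N0 * M ^\<^sub>m m) (N0 * mat_inv (1\<^sub>m N - tilde_mat S Sinv bs)))"
proof -
  define T where "T = tilde_mat S Sinv bs"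
  have N: "(\<Sum>x\<leftarrow>bs. fst x) = N"
    using similar_mat_witD2(5)[OF assms(1,3)] by auto
  have T_wit: "similar_mat_wit (1\<^sub>m N - T) (1\<^sub>m N - tilde_jordan bs) S Sinv"
    unfolding T_def by (intro similar_mat_wit_one_minus similar_mat_wit_tilde[OF assms(1,3)])
  have T: "T \<in> carrier_mat N N" unfolding T_def by (rule similar_mat_wit_tilde(1)[OF assms(1,3)])
  then have IT: "1\<^sub>m N - T \<in> carrier_mat N N" by (rule minus_carrier_mat)
  have "det (1\<^sub>m N - T) = det (1\<^sub>m N - tilde_jordan bs)"
    using T_wit by (intro det_similar) (auto simp: similar_mat_def)
  then have inv: "invertible_mat (1\<^sub>m N - T)"
    using det_one_minus_tilde_jordan[of bs] IT by (intro invertible_mat_if_det_nonzero) (auto simp: N)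
  have "L = N0 * mat_inv (1\<^sub>m N - T)"
    if L: "L \<in> carrier_mat r N" and sums: "mat_sums (\<lambda>m. N0 * M ^\<^sub>m m) L" for L
  proof -
    have "N0 * T ^\<^sub>m m = N0 * M ^\<^sub>m m" for m
      unfolding T_def using mat_sums_imp_tendsto_zero[OF L sums]
      by (rule tilde_mat_power_agrees[OF assms])
    then have "L * (1\<^sub>m N - T) = N0"
      using sums by (intro mat_sums_geometric[OF assms(2) T L]) simp
    then show ?thesis
      using mat_inv_right_inverse[OF IT inv] assoc_mult_mat[OF L IT] L by (metis right_mult_one_mat)
  qed
  then show ?thesis using inv unfolding T_def by auto
qed

end
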